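(* Let $M:\alpha\mapsto M_\alpha$ be a matroid flock on a finite set $E$, and let $\alpha,\beta\in\mathbb{Z}^E$. If $M_\alpha=M_\beta$, then there is a walk $\gamma^0,\ldots,\gamma^k\in\mathbb{Z}^E$ from $\alpha=\gamma^0$ to $\beta=\gamma^k$ such that $M_{\gamma^i}=M_\alpha$ for $i=0,\ldots,k$, and for each $i\in\{1,\ldots,k\}$ there is a set $J_i\subseteq E$ with $\gamma^i-\gamma^{i-1}=\pm e_{J_i}$.
   Context: $e_J:=\sum_{i\in J}e_i$ ($e_i$ unit vectors), $\mathbf{1}:=e_E$. A matroid flock of rank $d$ on $E$ is a map $M$ assigning to each $\alpha\in\mathbb{Z}^E$ a matroid $M_\alpha$ on $E$ of rank $d$ with (MF1) $M_\alpha/i=M_{\alpha+e_i}\setminus i$ for all $\alpha\in\mathbb{Z}^E$, $i\in E$ (contraction, deletion); and (MF2) $M_\alpha=M_{\alpha+\mathbf{1}}$ for all $\alpha$. *)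

theory Defs
  imports Main "HOL-Library.Function_Algebras"
begin

definition matroid :: "'a set \<Rightarrow> 'a set set \<Rightarrow> bool" where
  "matroid E \<I> \<longleftrightarrow> finite E \<and> (\<forall>X\<in>\<I>. X \<subseteq> E) \<and> {} \<in> \<I>
     \<and> (\<forall>X Y. X \<in> \<I> \<and> Y \<subseteq> X \<longrightarrow> Y \<in> \<I>)
     \<and> (\<forall>X Y. X \<in> \<I> \<and> Y \<in> \<I> \<and> card X < card Y \<longrightarrow> (\<exists>y\<in>Y - X. insert y X \<in> \<I>))"

definition matroid_rank :: "'a set set \<Rightarrow> nat \<Rightarrow> bool" where
  "matroid_rank \<I> d \<longleftrightarrow> (\<exists>X\<in>\<I>. card X = d) \<and> (\<forall>X\<in>\<I>. card X \<le> d)"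

definition mdelete :: "'a set set \<Rightarrow> 'a \<Rightarrow> 'a set set" where
  "mdelete \<I> i = {X \<in> \<I>. i \<notin> X}"

definition mcontract :: "'a set set \<Rightarrow> 'a \<Rightarrow> 'a set set" where
  "mcontract \<I> i = (if {i} \<in> \<I> then {X. i \<notin> X \<and> insert i X \<in> \<I>} else {X \<in> \<I>. i \<notin> X})"

definition ZE :: "'a set \<Rightarrow> ('a \<Rightarrow> int) set" where
  "ZE E = {\<alpha>. \<forall>x. x \<notin> E \<longrightarrow> \<alpha> x = 0}"

definition eJ :: "'a set \<Rightarrow> 'a \<Rightarrow> int" where
  "eJ J = (\<lambda>x. if x \<in> J then 1 else 0)"

definition matroid_flock :: "'a set \<Rightarrow> nat \<Rightarrow> (('a \<Rightarrow> int) \<Rightarrow> 'a set set) \<Rightarrow> bool" where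
  "matroid_flock E d M \<longleftrightarrow>
     (\<forall>\<alpha>\<in>ZE E. matroid E (M \<alpha>) \<and> matroid_rank (M \<alpha>) d)
   \<and> (\<forall>\<alpha>\<in>ZE E. \<forall>i\<in>E. mcontract (M \<alpha>) i = mdelete (M (\<alpha> + eJ {i})) i)
   \<and> (\<forall>\<alpha>\<in>ZE E. M \<alpha> = M (\<alpha> + eJ E))"

end

theory Submission
  imports Defs
begin

text \<open>
  Write r(\<gamma>, X) for the rank of X in M(\<gamma>). Iterating (MF1) gives
  r(\<gamma>, X \<union> K) = r(\<gamma> + e_K, X) + r(\<gamma>, K) for X disjoint from K, and shows that raising
  \<gamma> outside A cannot increase r(\<gamma>, A), while raising it inside A cannot decrease it.
  Suppose M(\<alpha>) = M(\<beta>) and let J be the set where \<beta> - \<alpha> attains its maximum m.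
  By (MF2) the vector \<beta> + (1 - m)\<one> also represents M(\<alpha>); it lies below \<alpha> + e_J and agrees
  with it on J, and comparing ranks shows that J separates both M(\<alpha>) and M(\<alpha> + e_J), with
  equal ranks on either side. Hence M(\<alpha> + e_J) = M(\<alpha>), and repeating this walks from \<alpha> up
  to \<beta> as soon as \<alpha> \<le> \<beta>, which is arranged beforehand by steps -\<one>.
\<close>

section \<open>The rank function of a matroid\<close>

definition mrank :: "'a set set \<Rightarrow> 'a set \<Rightarrow> nat" where
  "mrank I X = Max (card ` {Y \<in> I. Y \<subseteq> X})"

lemma matroid_family_finite: "matroid E I \<Longrightarrow> finite I"
  unfolding matroid_def by (meson Pow_iff finite_Pow_iff finite_subset subsetI)

lemma matroid_indep_finite: "matroid E I \<Longrightarrow> Y \<in> I \<Longrightarrow> finite Y"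
  unfolding matroid_def by (meson finite_subset)

lemma matroid_indep_subset: "matroid E I \<Longrightarrow> Y \<in> I \<Longrightarrow> Z \<subseteq> Y \<Longrightarrow> Z \<in> I"
  unfolding matroid_def by blast

lemma matroid_indep_ground: "matroid E I \<Longrightarrow> Y \<in> I \<Longrightarrow> Y \<subseteq> E"
  unfolding matroid_def by blast

lemma matroid_empty_indep: "matroid E I \<Longrightarrow> {} \<in> I"
  unfolding matroid_def by blast

lemma matroid_augment:
  "matroid E I \<Longrightarrow> X \<in> I \<Longrightarrow> Y \<in> I \<Longrightarrow> card X < card Y \<Longrightarrow> \<exists>y\<in>Y - X. insert y X \<in> I"
  unfolding matroid_def by blast

lemma card_le_mrank:
  assumes "matroid E I" "Y \<in> I" "Y \<subseteq> X"
  shows "card Y \<le> mrank I X"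
  unfolding mrank_def using matroid_family_finite[OF assms(1)] assms(2,3) by (intro Max_ge) auto

lemma mrank_attained:
  assumes "matroid E I"
  shows "\<exists>Y\<in>I. Y \<subseteq> X \<and> card Y = mrank I X"
proof -
  have "mrank I X \<in> card ` {Y \<in> I. Y \<subseteq> X}"
    unfolding mrank_def using matroid_family_finite[OF assms] matroid_empty_indep[OF assms]
    by (intro Max_in) auto
  then show ?thesis by auto
qed

lemma mrank_mono:
  assumes m: "matroid E I" and "X \<subseteq> X'"
  shows "mrank I X \<le> mrank I X'"
proof -
  obtain Y where Y: "Y \<in> I" "Y \<subseteq> X" "card Y = mrank I X" using mrank_attained[OF m] by blast
  then have "card Y \<le> mrank I X'" using assms(2) by (intro card_le_mrank[OF m]) auto
  then show ?thesis using Y(3) by simp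
qed

lemma mrank_le_card:
  assumes m: "matroid E I" and "finite X"
  shows "mrank I X \<le> card X"
proof -
  obtain Y where Y: "Y \<in> I" "Y \<subseteq> X" "card Y = mrank I X" using mrank_attained[OF m] by blast
  then show ?thesis using card_mono[OF assms(2) Y(2)] by simp
qed

lemma mrank_singleton_le: "matroid E I \<Longrightarrow> mrank I {i} \<le> 1"
  using mrank_le_card[of E I "{i}"] by simp

lemma mrank_extend:
  assumes m: "matroid E I" and "Y \<in> I" "Y \<subseteq> X"
  shows "\<exists>Z\<in>I. Y \<subseteq> Z \<and> Z \<subseteq> X \<and> card Z = mrank I X"
  using assms(2,3)
proof (induction "mrank I X - card Y" arbitrary: Y rule: less_induct)
  case less
  obtain W where W: "W \<in> I" "W \<subseteq> X" "card W = mrank I X"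
    using mrank_attained[OF m] by blast
  show ?case
  proof (cases "card Y < card W")
    case False
    then show ?thesis using less.prems card_le_mrank[OF m less.prems] W(3) by auto
  next
    case True
    then obtain y where y: "y \<in> W - Y" "insert y Y \<in> I"
      using matroid_augment[OF m less.prems(1) W(1)] by blast
    have "card (insert y Y) = Suc (card Y)"
      using y matroid_indep_finite[OF m less.prems(1)] by simp
    then have "mrank I X - card (insert y Y) < mrank I X - card Y" using True W(3) by simp
    moreover have "insert y Y \<subseteq> X" using y W(2) less.prems(2) by blast
    ultimately obtain Z where "Z \<in> I" "insert y Y \<subseteq> Z" "Z \<subseteq> X" "card Z = mrank I X"
      using less.hyps[OF _ y(2)] by blast
    then show ?thesis by blast
  qed
qed

lemma mrank_subadditive:
  assumes m: "matroid E I"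
  shows "mrank I (A \<union> B) \<le> mrank I A + mrank I B"
proof -
  obtain Y where Y: "Y \<in> I" "Y \<subseteq> A \<union> B" "card Y = mrank I (A \<union> B)"
    using mrank_attained[OF m] by blast
  have "Y = (Y \<inter> A) \<union> (Y \<inter> B)" using Y(2) by blast
  then have "card Y \<le> card (Y \<inter> A) + card (Y \<inter> B)" by (metis card_Un_le)
  moreover have "card (Y \<inter> A) \<le> mrank I A" "card (Y \<inter> B) \<le> mrank I B"
    using matroid_indep_subset[OF m Y(1)] by (auto intro: card_le_mrank[OF m])
  ultimately show ?thesis using Y(3) by simp
qed

lemma mrank_submodular:
  assumes m: "matroid E I"
  shows "mrank I (A \<union> B) + mrank I (A \<inter> B) \<le> mrank I A + mrank I B"
proof -
  obtain Y where Y: "Y \<in> I" "Y \<subseteq> A \<inter> B" "card Y = mrank I (A \<inter> B)"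
    using mrank_attained[OF m] by blast
  obtain Z where Z: "Z \<in> I" "Y \<subseteq> Z" "Z \<subseteq> A \<union> B" "card Z = mrank I (A \<union> B)"
    using mrank_extend[OF m Y(1)] Y(2) by blast
  have fin: "finite Z" using matroid_indep_finite[OF m Z(1)] .
  have "card (Z \<inter> A) + card (Z \<inter> B) = card ((Z \<inter> A) \<union> (Z \<inter> B)) + card ((Z \<inter> A) \<inter> (Z \<inter> B))"
    using fin by (intro card_Un_Int) auto
  moreover have "(Z \<inter> A) \<union> (Z \<inter> B) = Z" using Z(3) by blast
  moreover have "card Y \<le> card ((Z \<inter> A) \<inter> (Z \<inter> B))" using Y Z fin by (intro card_mono) auto
  moreover have "card (Z \<inter> A) \<le> mrank I A" "card (Z \<inter> B) \<le> mrank I B"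
    using matroid_indep_subset[OF m Z(1)] by (auto intro: card_le_mrank[OF m])
  ultimately show ?thesis using Y(3) Z(4) by simp
qed

lemma mrank_ground_eq:
  assumes m: "matroid E I" and "matroid_rank I d"
  shows "mrank I E = d"
proof -
  obtain X where "X \<in> I" "card X = d" using assms(2) unfolding matroid_rank_def by blast
  then have "d \<le> mrank I E" using card_le_mrank[OF m] matroid_indep_ground[OF m] by metis
  moreover obtain Y where "Y \<in> I" "card Y = mrank I E" using mrank_attained[OF m] by blast
  then have "mrank I E \<le> d" using assms(2) unfolding matroid_rank_def by metis
  ultimately show ?thesis by simp
qed

lemma matroid_eqI_mrank:
  assumes m1: "matroid E I1" and m2: "matroid E I2"
    and eq: "\<And>X. X \<subseteq> E \<Longrightarrow> mrank I1 X = mrank I2 X"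
  shows "I1 = I2"
proof -
  have "Y \<in> J2" if mJ1: "matroid E J1" and mJ2: "matroid E J2"
    and eqJ: "\<And>X. X \<subseteq> E \<Longrightarrow> mrank J1 X = mrank J2 X" and Y: "Y \<in> J1" for J1 J2 Y
  proof -
    have fin: "finite Y" using matroid_indep_finite[OF mJ1 Y] .
    have "card Y \<le> mrank J2 Y"
      using card_le_mrank[OF mJ1 Y order_refl] eqJ[OF matroid_indep_ground[OF mJ1 Y]] by simp
    moreover obtain Z where "Z \<in> J2" "Z \<subseteq> Y" "card Z = mrank J2 Y"
      using mrank_attained[OF mJ2] by blast
    ultimately show ?thesis using fin mrank_le_card[OF mJ2 fin] by (metis card_subset_eq le_antisym)
  qed
  from this[OF m1 m2 eq] this[OF m2 m1 eq[symmetric]] show ?thesis by blast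
qed

text \<open>Hypothesis \<open>sep\<close> says that \<open>J\<close> is a separator; the reverse inequality is subadditivity.\<close>

lemma mrank_separator_add:
  assumes m: "matroid E I" and J: "J \<subseteq> E"
    and sep: "mrank I J + mrank I (E - J) \<le> mrank I E"
    and Y: "Y \<subseteq> J" and Z: "Z \<subseteq> E - J"
  shows "mrank I (Y \<union> Z) = mrank I Y + mrank I Z"
proof -
  have "(Y \<union> (E - J)) \<union> J = E" "(Y \<union> (E - J)) \<inter> J = Y" using J Y by auto
  then have submod_J: "mrank I E + mrank I Y \<le> mrank I (Y \<union> (E - J)) + mrank I J"
    using mrank_submodular[OF m, of "Y \<union> (E - J)" J] by simp
  have "(Y \<union> Z) \<union> (E - J) = Y \<union> (E - J)" "(Y \<union> Z) \<inter> (E - J) = Z" using Y Z by auto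
  then have submod_EJ: "mrank I (Y \<union> (E - J)) + mrank I Z \<le> mrank I (Y \<union> Z) + mrank I (E - J)"
    using mrank_submodular[OF m, of "Y \<union> Z" "E - J"] by simp
  show ?thesis using submod_J submod_EJ sep mrank_subadditive[OF m, of Y Z] by linarith
qed

lemma matroid_eqI_separator:
  assumes m1: "matroid E I1" and m2: "matroid E I2" and J: "J \<subseteq> E"
    and sep1: "mrank I1 J + mrank I1 (E - J) \<le> mrank I1 E"
    and sep2: "mrank I2 J + mrank I2 (E - J) \<le> mrank I2 E"
    and inside: "\<And>Y. Y \<subseteq> J \<Longrightarrow> mrank I1 Y = mrank I2 Y"
    and outside: "\<And>Z. Z \<subseteq> E - J \<Longrightarrow> mrank I1 Z = mrank I2 Z"
  shows "I1 = I2"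
proof (rule matroid_eqI_mrank[OF m1 m2])
  fix X assume "X \<subseteq> E"
  then have parts: "X \<inter> J \<subseteq> J" "X - J \<subseteq> E - J" by auto
  have "mrank I1 X = mrank I1 (X \<inter> J) + mrank I1 (X - J)"
    using mrank_separator_add[OF m1 J sep1 parts] by (simp add: Int_Diff_Un)
  moreover have "mrank I2 X = mrank I2 (X \<inter> J) + mrank I2 (X - J)"
    using mrank_separator_add[OF m2 J sep2 parts] by (simp add: Int_Diff_Un)
  ultimately show "mrank I1 X = mrank I2 X" using inside[OF parts(1)] outside[OF parts(2)] by simp
qed

lemma mrank_coloop:
  assumes m: "matroid E I" and i: "i \<in> A" and coloop: "mrank I (E - {i}) < mrank I E"
  shows "mrank I A = Suc (mrank I (A - {i}))"
proof -
  obtain Y where Y: "Y \<in> I" "Y \<subseteq> A - {i}" "card Y = mrank I (A - {i})"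
    using mrank_attained[OF m] by blast
  then have "i \<notin> Y" by blast
  obtain Z where Z: "Z \<in> I" "Y \<subseteq> Z" "Z \<subseteq> E" "card Z = mrank I E"
    using mrank_extend[OF m Y(1) matroid_indep_ground[OF m Y(1)]] by blast
  have "i \<in> Z"
  proof (rule ccontr)
    assume "i \<notin> Z"
    then have "Z \<subseteq> E - {i}" using Z(3) by blast
    then have "card Z \<le> mrank I (E - {i})" by (rule card_le_mrank[OF m Z(1)])
    then show False using Z(4) coloop by simp
  qed
  then have "insert i Y \<subseteq> Z" using Z(2) by blast
  then have "insert i Y \<in> I" by (rule matroid_indep_subset[OF m Z(1)])
  moreover have "insert i Y \<subseteq> A" using Y(2) i by blast
  ultimately have "card (insert i Y) \<le> mrank I A" by (rule card_le_mrank[OF m])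
  moreover have "card (insert i Y) = Suc (card Y)"
    using \<open>i \<notin> Y\<close> matroid_indep_finite[OF m Y(1)] by simp
  moreover have "mrank I A \<le> mrank I (A - {i}) + mrank I {i}"
    using mrank_subadditive[OF m, of "A - {i}" "{i}"] i by (simp add: insert_absorb)
  ultimately show ?thesis using Y(3) mrank_singleton_le[OF m, of i] by simp
qed

lemma mrank_mdelete:
  assumes "i \<notin> X"
  shows "mrank (mdelete I i) X = mrank I X"
proof -
  have "{Y \<in> mdelete I i. Y \<subseteq> X} = {Y \<in> I. Y \<subseteq> X}"
    using assms unfolding mdelete_def by blast
  then show ?thesis unfolding mrank_def by simp
qed

lemma mrank_mcontract:
  assumes m: "matroid E I" and iX: "i \<notin> X"
  shows "mrank (mcontract I i) X + mrank I {i} = mrank I (insert i X)"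
proof (cases "{i} \<in> I")
  case True
  let ?S = "{Y \<in> mcontract I i. Y \<subseteq> X}"
  have S: "?S = {Y. i \<notin> Y \<and> insert i Y \<in> I \<and> Y \<subseteq> X}"
    using True unfolding mcontract_def by auto
  have "?S \<subseteq> (\<lambda>Y. Y - {i}) ` I"
  proof
    fix Y assume "Y \<in> ?S"
    then have "i \<notin> Y" "insert i Y \<in> I" unfolding S by auto
    then show "Y \<in> (\<lambda>Y. Y - {i}) ` I" by (intro image_eqI[of _ _ "insert i Y"]) auto
  qed
  then have fin: "finite ?S" using matroid_family_finite[OF m] by (meson finite_imageI finite_subset)
  obtain Z where Z: "Z \<in> I" "{i} \<subseteq> Z" "Z \<subseteq> insert i X" "card Z = mrank I (insert i X)"
    using mrank_extend[OF m True, of "insert i X"] by blast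
  have Z_S: "Z - {i} \<in> ?S" using Z unfolding S by (auto simp: insert_absorb)
  have card_Z: "card (Z - {i}) = mrank I (insert i X) - 1"
    using Z matroid_indep_finite[OF m Z(1)] by simp
  have "Max (card ` ?S) = mrank I (insert i X) - 1"
  proof (rule Max_eqI)
    show "finite (card ` ?S)" using fin by simp
    show "mrank I (insert i X) - 1 \<in> card ` ?S" by (rule image_eqI[where f = card, OF card_Z[symmetric] Z_S])
  next
    fix y assume "y \<in> card ` ?S"
    then obtain Y where y: "y = card Y" and Y: "i \<notin> Y" "insert i Y \<in> I" "Y \<subseteq> X"
      unfolding S by auto
    have "insert i Y \<subseteq> insert i X" using Y(3) by blast
    then have "card (insert i Y) \<le> mrank I (insert i X)" by (rule card_le_mrank[OF m Y(2)])
    then show "y \<le> mrank I (insert i X) - 1" using y Y matroid_indep_finite[OF m Y(2)] by simp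
  qed
  then have "mrank (mcontract I i) X = mrank I (insert i X) - 1" by (simp only: mrank_def)
  moreover have "mrank I {i} = 1"
    using card_le_mrank[OF m True, of "{i}"] mrank_singleton_le[OF m, of i] by (simp add: le_antisym)
  moreover have "1 \<le> mrank I (insert i X)" using card_le_mrank[OF m True, of "insert i X"] by simp
  ultimately show ?thesis by simp
next
  case False
  then have no_i: "i \<notin> Y" if "Y \<in> I" for Y using that matroid_indep_subset[OF m] by blast
  obtain Y where Y: "Y \<in> I" "Y \<subseteq> {i}" "card Y = mrank I {i}"
    using mrank_attained[OF m] by blast
  then have "Y = {}" using no_i by blast
  then have "mrank I {i} = 0" using Y(3) by simp
  moreover have "mrank (mcontract I i) X = mrank I X"
    using False mrank_mdelete[OF iX] unfolding mcontract_def mdelete_def by simp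
  moreover have "mrank I (insert i X) \<le> mrank I X"
  proof -
    obtain Z where Z: "Z \<in> I" "Z \<subseteq> insert i X" "card Z = mrank I (insert i X)"
      using mrank_attained[OF m] by blast
    then have "Z \<subseteq> X" using no_i by blast
    then show ?thesis using card_le_mrank[OF m Z(1)] Z(3) by simp
  qed
  ultimately show ?thesis using mrank_mono[OF m, of X "insert i X"] by auto
qed

section \<open>Rank functions along a matroid flock\<close>

lemma ZE_add: "f \<in> ZE E \<Longrightarrow> g \<in> ZE E \<Longrightarrow> f + g \<in> ZE E"
  unfolding ZE_def by simp

lemma ZE_diff: "f \<in> ZE E \<Longrightarrow> g \<in> ZE E \<Longrightarrow> f - g \<in> ZE E"
  unfolding ZE_def by simp

lemma eJ_in_ZE: "J \<subseteq> E \<Longrightarrow> eJ J \<in> ZE E"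
  unfolding ZE_def eJ_def by auto

lemma flock_matroid: "matroid_flock E d M \<Longrightarrow> \<alpha> \<in> ZE E \<Longrightarrow> matroid E (M \<alpha>)"
  unfolding matroid_flock_def by blast

lemma flock_mrank_ground: "matroid_flock E d M \<Longrightarrow> \<alpha> \<in> ZE E \<Longrightarrow> mrank (M \<alpha>) E = d"
  unfolding matroid_flock_def using mrank_ground_eq by blast

lemma flock_contract_delete:
  "matroid_flock E d M \<Longrightarrow> \<alpha> \<in> ZE E \<Longrightarrow> i \<in> E \<Longrightarrow> mcontract (M \<alpha>) i = mdelete (M (\<alpha> + eJ {i})) i"
  unfolding matroid_flock_def by blast

lemma flock_periodic: "matroid_flock E d M \<Longrightarrow> \<alpha> \<in> ZE E \<Longrightarrow> M (\<alpha> + eJ E) = M \<alpha>"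
  unfolding matroid_flock_def by (rule sym) blast

lemma flock_periodic_int:
  assumes fl: "matroid_flock E d M" and \<gamma>: "\<gamma> \<in> ZE E"
  shows "M (\<lambda>x. \<gamma> x + c * eJ E x) = M \<gamma>"
proof (induction c rule: int_induct[where k = 0])
  case base
  then show ?case by simp
next
  case (step1 c)
  have \<delta>: "(\<lambda>x. \<gamma> x + c * eJ E x) \<in> ZE E" using \<gamma> unfolding ZE_def eJ_def by auto
  have "(\<lambda>x. \<gamma> x + (c + 1) * eJ E x) = (\<lambda>x. \<gamma> x + c * eJ E x) + eJ E"
    by (auto simp: fun_eq_iff algebra_simps)
  then have "M (\<lambda>x. \<gamma> x + (c + 1) * eJ E x) = M (\<lambda>x. \<gamma> x + c * eJ E x)"
    using flock_periodic[OF fl \<delta>] by (simp only:)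
  then show ?case using step1(2) by (rule trans)
next
  case (step2 c)
  have \<delta>: "(\<lambda>x. \<gamma> x + (c - 1) * eJ E x) \<in> ZE E" using \<gamma> unfolding ZE_def eJ_def by auto
  have "(\<lambda>x. \<gamma> x + c * eJ E x) = (\<lambda>x. \<gamma> x + (c - 1) * eJ E x) + eJ E"
    by (auto simp: fun_eq_iff algebra_simps)
  then have "M (\<lambda>x. \<gamma> x + c * eJ E x) = M (\<lambda>x. \<gamma> x + (c - 1) * eJ E x)"
    using flock_periodic[OF fl \<delta>] by (simp only:)
  then show ?case using step2(2) by simp
qed

lemma flock_mrank_step:
  assumes fl: "matroid_flock E d M" and \<gamma>: "\<gamma> \<in> ZE E" and i: "i \<in> E" and iX: "i \<notin> X"
  shows "mrank (M (\<gamma> + eJ {i})) X + mrank (M \<gamma>) {i} = mrank (M \<gamma>) (insert i X)"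
  using mrank_mcontract[OF flock_matroid[OF fl \<gamma>] iX] mrank_mdelete[OF iX]
  by (simp add: flock_contract_delete[OF fl \<gamma> i])

lemma flock_mrank_contract_set:
  assumes fl: "matroid_flock E d M" and fin: "finite E" and \<gamma>: "\<gamma> \<in> ZE E"
    and K: "K \<subseteq> E" and X: "X \<inter> K = {}"
  shows "mrank (M \<gamma>) (X \<union> K) = mrank (M (\<gamma> + eJ K)) X + mrank (M \<gamma>) K"
  using finite_subset[OF K fin] K X
proof (induction K arbitrary: X rule: finite_induct)
  case empty
  have "\<gamma> + eJ {} = \<gamma>" by (simp add: fun_eq_iff eJ_def)
  then show ?case using mrank_le_card[OF flock_matroid[OF fl \<gamma>], of "{}"] by simp
next
  case (insert i K)
  have \<gamma>K: "\<gamma> + eJ K \<in> ZE E" using insert.prems(1) by (intro ZE_add \<gamma> eJ_in_ZE) auto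
  have iE: "i \<in> E" and iX: "i \<notin> X" using insert.prems by auto
  have "\<gamma> + eJ (insert i K) = (\<gamma> + eJ K) + eJ {i}"
    using insert.hyps(2) by (auto simp: fun_eq_iff eJ_def)
  then have step: "mrank (M (\<gamma> + eJ (insert i K))) X + mrank (M (\<gamma> + eJ K)) {i}
      = mrank (M (\<gamma> + eJ K)) (insert i X)"
    using flock_mrank_step[OF fl \<gamma>K iE iX] by (simp only:)
  have KE: "K \<subseteq> E" and disj: "insert i X \<inter> K = {}" "{i} \<inter> K = {}"
    using insert.prems insert.hyps(2) by auto
  have "mrank (M \<gamma>) (insert i X \<union> K) = mrank (M (\<gamma> + eJ K)) (insert i X) + mrank (M \<gamma>) K"
    using insert.IH KE disj(1) by blast
  moreover have "mrank (M \<gamma>) ({i} \<union> K) = mrank (M (\<gamma> + eJ K)) {i} + mrank (M \<gamma>) K"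
    using insert.IH KE disj(2) by blast
  ultimately show ?case using step by (simp add: plus_fun_def)
qed

lemma flock_mrank_step_le:
  assumes fl: "matroid_flock E d M" and \<gamma>: "\<gamma> \<in> ZE E" and i: "i \<in> E" and iA: "i \<notin> A"
  shows "mrank (M (\<gamma> + eJ {i})) A \<le> mrank (M \<gamma>) A"
  using flock_mrank_step[OF fl \<gamma> i iA] mrank_subadditive[OF flock_matroid[OF fl \<gamma>], of "{i}" A]
  by simp

lemma flock_mrank_step_ge:
  assumes fl: "matroid_flock E d M" and \<gamma>: "\<gamma> \<in> ZE E" and i: "i \<in> E" and iA: "i \<in> A"
  shows "mrank (M \<gamma>) A \<le> mrank (M (\<gamma> + eJ {i})) A"
proof -
  have \<gamma>i: "\<gamma> + eJ {i} \<in> ZE E" using i by (intro ZE_add \<gamma> eJ_in_ZE) auto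
  have m: "matroid E (M (\<gamma> + eJ {i}))" using flock_matroid[OF fl \<gamma>i] .
  have A: "mrank (M (\<gamma> + eJ {i})) (A - {i}) + mrank (M \<gamma>) {i} = mrank (M \<gamma>) A"
    using flock_mrank_step[OF fl \<gamma> i, of "A - {i}"] iA by (simp add: insert_absorb)
  consider "mrank (M \<gamma>) {i} = 0" | "mrank (M \<gamma>) {i} = 1"
    using mrank_singleton_le[OF flock_matroid[OF fl \<gamma>], of i] by linarith
  then show ?thesis
  proof cases
    case 1
    then show ?thesis using A mrank_mono[OF m, of "A - {i}" A] by auto
  next
    case 2
    have "mrank (M (\<gamma> + eJ {i})) (E - {i}) + mrank (M \<gamma>) {i} = mrank (M \<gamma>) E"
      using flock_mrank_step[OF fl \<gamma> i, of "E - {i}"] i by (simp add: insert_absorb)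
    then have "mrank (M (\<gamma> + eJ {i})) (E - {i}) < mrank (M (\<gamma> + eJ {i})) E"
      using 2 flock_mrank_ground[OF fl \<gamma>] flock_mrank_ground[OF fl \<gamma>i] by simp
    then show ?thesis using mrank_coloop[OF m iA] A 2 by simp
  qed
qed

lemma ZE_le_induct:
  assumes fin: "finite E" and \<gamma>: "\<gamma> \<in> ZE E" and \<gamma>': "\<gamma>' \<in> ZE E" and le: "\<gamma> \<le> \<gamma>'"
    and top: "P \<gamma>'"
    and step: "\<And>\<delta>. \<delta> \<in> ZE E \<Longrightarrow> \<delta> \<le> \<gamma>' \<Longrightarrow> {i \<in> E. \<delta> i < \<gamma>' i} \<noteq> {}
      \<Longrightarrow> (\<And>J. J \<subseteq> {i \<in> E. \<delta> i < \<gamma>' i} \<Longrightarrow> J \<noteq> {} \<Longrightarrow> P (\<delta> + eJ J)) \<Longrightarrow> P \<delta>"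
  shows "P \<gamma>"
  using \<gamma> le
proof (induction "\<Sum>x\<in>E. nat (\<gamma>' x - \<gamma> x)" arbitrary: \<gamma> rule: less_induct)
  case less
  show ?case
  proof (cases "\<gamma> = \<gamma>'")
    case True
    then show ?thesis using top by simp
  next
    case False
    then obtain i where i: "\<gamma> i \<noteq> \<gamma>' i" by blast
    then have "i \<in> E" using less.prems(1) \<gamma>' unfolding ZE_def by (cases "i \<in> E") auto
    moreover have "\<gamma> i < \<gamma>' i" using le_funD[OF less.prems(2), of i] i by simp
    ultimately have up: "{i \<in> E. \<gamma> i < \<gamma>' i} \<noteq> {}" by blast
    show ?thesis
    proof (rule step[OF less.prems up])
      fix J assume J: "J \<subseteq> {i \<in> E. \<gamma> i < \<gamma>' i}" "J \<noteq> {}"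
      then obtain j where j: "j \<in> J" by blast
      have "\<gamma> + eJ J \<in> ZE E" using J by (intro ZE_add less.prems eJ_in_ZE) auto
      moreover have "\<gamma> + eJ J \<le> \<gamma>'" using less.prems(2) J by (auto simp: le_fun_def eJ_def)
      moreover have "(\<Sum>x\<in>E. nat (\<gamma>' x - (\<gamma> + eJ J) x)) < (\<Sum>x\<in>E. nat (\<gamma>' x - \<gamma> x))"
      proof (rule sum_strict_mono_ex1[OF fin])
        show "\<forall>x\<in>E. nat (\<gamma>' x - (\<gamma> + eJ J) x) \<le> nat (\<gamma>' x - \<gamma> x)" by (auto simp: eJ_def)
        show "\<exists>x\<in>E. nat (\<gamma>' x - (\<gamma> + eJ J) x) < nat (\<gamma>' x - \<gamma> x)"
          using J j by (intro bexI[of _ j]) (auto simp: eJ_def)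
      qed
      ultimately show "P (\<gamma> + eJ J)" using less.hyps by blast
    qed
  qed
qed

lemma flock_mrank_antimono_outside:
  assumes fl: "matroid_flock E d M" and fin: "finite E"
    and \<gamma>: "\<gamma> \<in> ZE E" and \<gamma>': "\<gamma>' \<in> ZE E" and le: "\<gamma> \<le> \<gamma>'" and agree: "\<forall>x\<in>A. \<gamma> x = \<gamma>' x"
  shows "mrank (M \<gamma>') A \<le> mrank (M \<gamma>) A"
proof -
  define P where "P \<delta> \<longleftrightarrow> (\<forall>x\<in>A. \<delta> x = \<gamma>' x) \<longrightarrow> mrank (M \<gamma>') A \<le> mrank (M \<delta>) A" for \<delta>
  have "P \<gamma>"
  proof (rule ZE_le_induct[OF fin \<gamma> \<gamma>' le])
    show "P \<gamma>'" unfolding P_def by simp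
  next
    fix \<delta> assume \<delta>: "\<delta> \<in> ZE E" and up: "{i \<in> E. \<delta> i < \<gamma>' i} \<noteq> {}"
      and IH: "\<And>J. J \<subseteq> {i \<in> E. \<delta> i < \<gamma>' i} \<Longrightarrow> J \<noteq> {} \<Longrightarrow> P (\<delta> + eJ J)"
    obtain i where i: "i \<in> E" "\<delta> i < \<gamma>' i" using up by blast
    show "P \<delta>" unfolding P_def
    proof
      assume agree\<delta>: "\<forall>x\<in>A. \<delta> x = \<gamma>' x"
      then have "i \<notin> A" using i by force
      then have "mrank (M \<gamma>') A \<le> mrank (M (\<delta> + eJ {i})) A"
        using IH[of "{i}"] i agree\<delta> unfolding P_def by (auto simp: eJ_def)
      then show "mrank (M \<gamma>') A \<le> mrank (M \<delta>) A"
        using flock_mrank_step_le[OF fl \<delta> i(1) \<open>i \<notin> A\<close>] by simp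
    qed
  qed
  then show ?thesis using agree unfolding P_def by simp
qed

lemma flock_mrank_mono_inside:
  assumes fl: "matroid_flock E d M" and fin: "finite E"
    and \<gamma>: "\<gamma> \<in> ZE E" and \<gamma>': "\<gamma>' \<in> ZE E" and le: "\<gamma> \<le> \<gamma>'" and agree: "\<forall>x. x \<notin> A \<longrightarrow> \<gamma> x = \<gamma>' x"
  shows "mrank (M \<gamma>) A \<le> mrank (M \<gamma>') A"
proof -
  define P where "P \<delta> \<longleftrightarrow> (\<forall>x. x \<notin> A \<longrightarrow> \<delta> x = \<gamma>' x) \<longrightarrow> mrank (M \<delta>) A \<le> mrank (M \<gamma>') A" for \<delta>
  have "P \<gamma>"
  proof (rule ZE_le_induct[OF fin \<gamma> \<gamma>' le])
    show "P \<gamma>'" unfolding P_def by simp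
  next
    fix \<delta> assume \<delta>: "\<delta> \<in> ZE E" and up: "{i \<in> E. \<delta> i < \<gamma>' i} \<noteq> {}"
      and IH: "\<And>J. J \<subseteq> {i \<in> E. \<delta> i < \<gamma>' i} \<Longrightarrow> J \<noteq> {} \<Longrightarrow> P (\<delta> + eJ J)"
    obtain i where i: "i \<in> E" "\<delta> i < \<gamma>' i" using up by blast
    show "P \<delta>" unfolding P_def
    proof
      assume agree\<delta>: "\<forall>x. x \<notin> A \<longrightarrow> \<delta> x = \<gamma>' x"
      then have "i \<in> A" using i by force
      then have "mrank (M (\<delta> + eJ {i})) A \<le> mrank (M \<gamma>') A"
        using IH[of "{i}"] i agree\<delta> unfolding P_def by (auto simp: eJ_def)
      then show "mrank (M \<delta>) A \<le> mrank (M \<gamma>') A"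
        using flock_mrank_step_ge[OF fl \<delta> i(1) \<open>i \<in> A\<close>] by simp
    qed
  qed
  then show ?thesis using agree unfolding P_def by simp
qed

section \<open>Raising the maximal coordinates of the difference\<close>

lemma flock_argmax_separators:
  assumes fl: "matroid_flock E d M" and fin: "finite E"
    and \<alpha>: "\<alpha> \<in> ZE E" and \<beta>: "\<beta> \<in> ZE E" and eq: "M \<alpha> = M \<beta>" and J: "J \<subseteq> E"
    and on_J: "\<forall>x\<in>J. \<beta> x - \<alpha> x = m" and off_J: "\<forall>x\<in>E - J. \<beta> x - \<alpha> x < m"
  shows "mrank (M \<alpha>) J + mrank (M \<alpha>) (E - J) \<le> d"
    and "mrank (M (\<alpha> + eJ J)) J + mrank (M (\<alpha> + eJ J)) (E - J) \<le> d"
proof -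
  have \<alpha>J: "\<alpha> + eJ J \<in> ZE E" using J by (intro ZE_add \<alpha> eJ_in_ZE)
  have "(E - J) \<union> J = E" and disj: "(E - J) \<inter> J = {}" using J by auto
  then have split: "d = mrank (M (\<alpha> + eJ J)) (E - J) + mrank (M \<alpha>) J"
    using flock_mrank_contract_set[OF fl fin \<alpha> J disj] flock_mrank_ground[OF fl \<alpha>] by simp
  define \<beta>' where "\<beta>' = (\<lambda>x. \<beta> x + (1 - m) * eJ E x)"
  have \<beta>': "\<beta>' \<in> ZE E" using \<beta> unfolding \<beta>'_def ZE_def eJ_def by auto
  have M\<beta>': "M \<beta>' = M \<alpha>" using flock_periodic_int[OF fl \<beta>] eq unfolding \<beta>'_def by simp
  have outside_E: "\<alpha> x = 0" "\<beta> x = 0" if "x \<notin> E" for x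
    using that \<alpha> \<beta> unfolding ZE_def by auto
  have "\<beta>' x \<le> (\<alpha> + eJ J) x \<and> (x \<in> J \<or> x \<notin> E - J \<longrightarrow> \<beta>' x = (\<alpha> + eJ J) x)" for x
    using on_J[rule_format, of x] off_J[rule_format, of x] outside_E[of x] J unfolding \<beta>'_def eJ_def
    by (cases "x \<in> J"; cases "x \<in> E") (auto simp: algebra_simps)
  then have le: "\<beta>' \<le> \<alpha> + eJ J" and agree_J: "\<forall>x\<in>J. \<beta>' x = (\<alpha> + eJ J) x"
    and agree_out: "\<forall>x. x \<notin> E - J \<longrightarrow> \<beta>' x = (\<alpha> + eJ J) x"
    by (auto simp: le_fun_def)
  have "mrank (M (\<alpha> + eJ J)) J \<le> mrank (M \<alpha>) J"
    using flock_mrank_antimono_outside[OF fl fin \<beta>' \<alpha>J le agree_J] M\<beta>' by (simp add: plus_fun_def)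
  moreover have "mrank (M \<alpha>) (E - J) \<le> mrank (M (\<alpha> + eJ J)) (E - J)"
    using flock_mrank_mono_inside[OF fl fin \<beta>' \<alpha>J le agree_out] M\<beta>' by (simp add: plus_fun_def)
  ultimately show "mrank (M \<alpha>) J + mrank (M \<alpha>) (E - J) \<le> d"
    and "mrank (M (\<alpha> + eJ J)) J + mrank (M (\<alpha> + eJ J)) (E - J) \<le> d"
    using split by linarith+
qed

lemma flock_argmax_step:
  assumes fl: "matroid_flock E d M" and fin: "finite E"
    and \<alpha>: "\<alpha> \<in> ZE E" and \<beta>: "\<beta> \<in> ZE E" and eq: "M \<alpha> = M \<beta>" and J: "J \<subseteq> E"
    and on_J: "\<forall>x\<in>J. \<beta> x - \<alpha> x = m" and off_J: "\<forall>x\<in>E - J. \<beta> x - \<alpha> x < m"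
  shows "M (\<alpha> + eJ J) = M \<alpha>"
proof -
  have \<alpha>J: "\<alpha> + eJ J \<in> ZE E" using J by (intro ZE_add \<alpha> eJ_in_ZE)
  note m = flock_matroid[OF fl \<alpha>] and mJ = flock_matroid[OF fl \<alpha>J]
  note sep = flock_argmax_separators[OF assms]
  have sep\<alpha>: "mrank (M \<alpha>) J + mrank (M \<alpha>) (E - J) \<le> mrank (M \<alpha>) E"
    by (subst flock_mrank_ground[OF fl \<alpha>]) (rule sep(1))
  have sep\<alpha>J: "mrank (M (\<alpha> + eJ J)) J + mrank (M (\<alpha> + eJ J)) (E - J) \<le> mrank (M (\<alpha> + eJ J)) E"
    by (subst flock_mrank_ground[OF fl \<alpha>J]) (rule sep(2))
  \<comment> \<open>By (MF2), \<open>\<alpha> - e_(E - J)\<close> represents \<open>M(\<alpha> + e_J)\<close>, and raising it on \<open>E - J\<close> gives back \<open>\<alpha>\<close>.\<close>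
  have \<alpha>'': "\<alpha> - eJ (E - J) \<in> ZE E" by (intro ZE_diff \<alpha> eJ_in_ZE) auto
  have "\<alpha> - eJ (E - J) + eJ E = \<alpha> + eJ J" using J by (auto simp: fun_eq_iff eJ_def)
  then have M\<alpha>'': "M (\<alpha> + eJ J) = M (\<alpha> - eJ (E - J))" using flock_periodic[OF fl \<alpha>''] by (simp only:)
  show ?thesis
  proof (rule matroid_eqI_separator[OF mJ m J sep\<alpha>J sep\<alpha>])
    fix Y assume Y: "Y \<subseteq> J"
    have "mrank (M (\<alpha> + eJ J)) (Y \<union> (E - J)) = mrank (M \<alpha>) Y + mrank (M (\<alpha> + eJ J)) (E - J)"
      using flock_mrank_contract_set[OF fl fin \<alpha>'', of "E - J" Y] Y unfolding M\<alpha>'' by auto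
    then show "mrank (M (\<alpha> + eJ J)) Y = mrank (M \<alpha>) Y"
      using mrank_separator_add[OF mJ J sep\<alpha>J Y order_refl] by simp
  next
    fix Z assume Z: "Z \<subseteq> E - J"
    have "mrank (M \<alpha>) (Z \<union> J) = mrank (M (\<alpha> + eJ J)) Z + mrank (M \<alpha>) J"
      using flock_mrank_contract_set[OF fl fin \<alpha> J, of Z] Z by blast
    then show "mrank (M (\<alpha> + eJ J)) Z = mrank (M \<alpha>) Z"
      using mrank_separator_add[OF m J sep\<alpha> order_refl Z] by (simp add: Un_commute)
  qed
qed

section \<open>Walks\<close>

definition walk :: "(('a \<Rightarrow> int) \<Rightarrow> 'b) \<Rightarrow> 'a set \<Rightarrow> ('a \<Rightarrow> int) \<Rightarrow> ('a \<Rightarrow> int) \<Rightarrow> bool" where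
  "walk M E a b \<longleftrightarrow> (\<exists>(k::nat) (\<gamma>::nat \<Rightarrow> 'a \<Rightarrow> int). \<gamma> 0 = a \<and> \<gamma> k = b
     \<and> (\<forall>i\<le>k. \<gamma> i \<in> ZE E \<and> M (\<gamma> i) = M a)
     \<and> (\<forall>i\<in>{1..k}. \<exists>J\<subseteq>E. \<gamma> i - \<gamma> (i - 1) = eJ J \<or> \<gamma> i - \<gamma> (i - 1) = - eJ J))"

lemma walk_refl: "a \<in> ZE E \<Longrightarrow> walk M E a a"
  unfolding walk_def by (rule exI[of _ 0], rule exI[of _ "\<lambda>_. a"]) auto

lemma walk_Cons:
  assumes a: "a \<in> ZE E" and eq: "M a = M a'" and J: "J \<subseteq> E"
    and st: "a' - a = eJ J \<or> a' - a = - eJ J" and w: "walk M E a' b"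
  shows "walk M E a b"
proof -
  obtain k :: nat and \<gamma> :: "nat \<Rightarrow> 'a \<Rightarrow> int" where \<gamma>: "\<gamma> 0 = a'" "\<gamma> k = b" "\<forall>i\<le>k. \<gamma> i \<in> ZE E \<and> M (\<gamma> i) = M a'"
    and steps: "\<forall>i\<in>{1..k}. \<exists>J\<subseteq>E. \<gamma> i - \<gamma> (i - 1) = eJ J \<or> \<gamma> i - \<gamma> (i - 1) = - eJ J"
    using w unfolding walk_def by blast
  let ?\<gamma> = "case_nat a \<gamma>"
  have "\<forall>i\<le>Suc k. ?\<gamma> i \<in> ZE E \<and> M (?\<gamma> i) = M a"
    using \<gamma>(3) a eq by (auto split: nat.split)
  moreover have "\<exists>J\<subseteq>E. ?\<gamma> i - ?\<gamma> (i - 1) = eJ J \<or> ?\<gamma> i - ?\<gamma> (i - 1) = - eJ J"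
    if i_range: "i \<in> {1..Suc k}" for i
  proof -
    obtain j where i: "i = Suc j" "j \<le> k" using i_range by (cases i) auto
    show ?thesis
    proof (cases j)
      case 0
      then show ?thesis using i st J \<gamma>(1) by auto
    next
      case (Suc j')
      then have "Suc j' \<in> {1..k}" using i by auto
      from bspec[OF steps this] show ?thesis using i Suc by simp
    qed
  qed
  ultimately show ?thesis unfolding walk_def
    by (intro exI[of _ "Suc k"] exI[of _ ?\<gamma>]) (simp add: \<gamma>(2))
qed

lemma flock_walk_up:
  assumes fl: "matroid_flock E d M" and fin: "finite E"
    and \<gamma>: "\<gamma> \<in> ZE E" and \<beta>: "\<beta> \<in> ZE E" and le: "\<gamma> \<le> \<beta>" and eq: "M \<gamma> = M \<beta>"
  shows "walk M E \<gamma> \<beta>"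
proof -
  define P where "P \<delta> \<longleftrightarrow> M \<delta> = M \<beta> \<longrightarrow> walk M E \<delta> \<beta>" for \<delta>
  have "P \<gamma>"
  proof (rule ZE_le_induct[OF fin \<gamma> \<beta> le])
    show "P \<beta>" unfolding P_def using walk_refl[OF \<beta>] by simp
  next
    fix \<delta> assume \<delta>: "\<delta> \<in> ZE E" and up: "{i \<in> E. \<delta> i < \<beta> i} \<noteq> {}"
      and IH: "\<And>J. J \<subseteq> {i \<in> E. \<delta> i < \<beta> i} \<Longrightarrow> J \<noteq> {} \<Longrightarrow> P (\<delta> + eJ J)"
    show "P \<delta>" unfolding P_def
    proof
      assume eq\<delta>: "M \<delta> = M \<beta>"
      define m where "m = Max ((\<lambda>x. \<beta> x - \<delta> x) ` E)"
      define J where "J = {x \<in> E. \<beta> x - \<delta> x = m}"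
      have m_max: "\<forall>x\<in>E. \<beta> x - \<delta> x \<le> m" unfolding m_def using fin by simp
      obtain i where i: "i \<in> E" "\<delta> i < \<beta> i" using up by blast
      have "m \<in> (\<lambda>x. \<beta> x - \<delta> x) ` E" unfolding m_def using fin i by (intro Max_in) auto
      then have "J \<noteq> {}" unfolding J_def by auto
      moreover have J_up: "J \<subseteq> {i \<in> E. \<delta> i < \<beta> i}" using m_max i unfolding J_def by force
      moreover have M\<delta>J: "M (\<delta> + eJ J) = M \<delta>"
        using m_max by (intro flock_argmax_step[OF fl fin \<delta> \<beta> eq\<delta>, of J m]) (auto simp: J_def)
      ultimately have "walk M E (\<delta> + eJ J) \<beta>" using IH eq\<delta> unfolding P_def by auto
      moreover have "J \<subseteq> E" unfolding J_def by blast
      ultimately show "walk M E \<delta> \<beta>"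
        using walk_Cons[where M = M, OF \<delta> M\<delta>J[symmetric] \<open>J \<subseteq> E\<close>] by simp
    qed
  qed
  then show ?thesis using eq unfolding P_def by simp
qed

lemma flock_walk_down_up:
  assumes fl: "matroid_flock E d M" and fin: "finite E"
    and \<gamma>: "\<gamma> \<in> ZE E" and \<beta>: "\<beta> \<in> ZE E" and eq: "M \<gamma> = M \<beta>"
    and below: "\<forall>x\<in>E. \<gamma> x - int n \<le> \<beta> x"
  shows "walk M E \<gamma> \<beta>"
  using \<gamma> eq below
proof (induction n arbitrary: \<gamma>)
  case 0
  have "\<gamma> \<le> \<beta>" unfolding le_fun_def
  proof
    fix x show "\<gamma> x \<le> \<beta> x" using 0 \<beta> by (cases "x \<in> E") (auto simp: ZE_def)
  qed
  then show ?case using flock_walk_up[OF fl fin 0(1) \<beta> _ 0(2)] by blast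
next
  case (Suc n)
  define \<gamma>' where "\<gamma>' = \<gamma> - eJ E"
  have \<gamma>': "\<gamma>' \<in> ZE E" unfolding \<gamma>'_def using Suc.prems(1) by (intro ZE_diff eJ_in_ZE) auto
  have M\<gamma>': "M \<gamma>' = M \<gamma>" using flock_periodic[OF fl \<gamma>'] by (simp add: \<gamma>'_def)
  have "\<forall>x\<in>E. \<gamma>' x - int n \<le> \<beta> x" using Suc.prems(3) by (auto simp: \<gamma>'_def eJ_def)
  then have "walk M E \<gamma>' \<beta>" using Suc.IH \<gamma>' M\<gamma>' Suc.prems(2) by simp
  moreover have "\<gamma>' - \<gamma> = - eJ E" by (simp add: \<gamma>'_def)
  ultimately show ?case using walk_Cons[where M = M, OF Suc.prems(1) M\<gamma>'[symmetric] order_refl] by simp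
qed

theorem mainTheorem16:
  fixes E :: "'a set" and d :: nat and M :: "('a \<Rightarrow> int) \<Rightarrow> 'a set set"
    and \<alpha> \<beta> :: "'a \<Rightarrow> int"
  assumes "finite E" and "matroid_flock E d M"
    and "\<alpha> \<in> ZE E" and "\<beta> \<in> ZE E" and "M \<alpha> = M \<beta>"
  shows "\<exists>(k::nat) (\<gamma>::nat \<Rightarrow> 'a \<Rightarrow> int). \<gamma> 0 = \<alpha> \<and> \<gamma> k = \<beta>
     \<and> (\<forall>i\<le>k. \<gamma> i \<in> ZE E \<and> M (\<gamma> i) = M \<alpha>)
     \<and> (\<forall>i\<in>{1..k}. \<exists>J\<subseteq>E. \<gamma> i - \<gamma> (i - 1) = eJ J \<or> \<gamma> i - \<gamma> (i - 1) = - eJ J)"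
proof -
  define n where "n = (\<Sum>x\<in>E. nat (\<alpha> x - \<beta> x))"
  have "\<forall>x\<in>E. \<alpha> x - int n \<le> \<beta> x"
  proof
    fix x assume "x \<in> E"
    then have "nat (\<alpha> x - \<beta> x) \<le> n" unfolding n_def using assms(1) by (intro member_le_sum) auto
    then show "\<alpha> x - int n \<le> \<beta> x" by linarith
  qed
  then show ?thesis
    using flock_walk_down_up[OF assms(2,1,3,4,5)] unfolding walk_def by blast
qed

end
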